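(* Let $N$ be even, $p=N/2$, and consider the $(N,p)$-projective code, whose qubits are the projective $p$-faces. Let $\mathcal{E}$ be an error (set of qubits) of weight $|\mathcal{E}|\le N/64$. Then the number of checks indexed by projective $(p+1)$-faces that act on at least one qubit of $\mathcal{E}$ is at least $|\mathcal{E}|\cdot(N/2)\cdot(15/16)$, and the number of checks indexed by projective $(p-1)$-faces that act on at least one qubit of $\mathcal{E}$ is at least $|\mathcal{E}|\cdot N\cdot(15/16)$.
   Context: A $r$-face of the $N$-cube is a word in $\{0,1,*\}^N$ with exactly $r$ symbols $*$. The projective cube identifies a face $x$ with $x+\mathbf{1}$ (complementing every non-$*$ entry, with the convention $*+0=*+1=*$); a projective $r$-face is such an equivalence class. The upper shadow of a face replaces one non-$*$ entry by $*$; the lower shadow replaces one $*$ by $0$ or $1$; these are extended to projective faces by taking equivalence classes. The $(N,p)$-projective code is the CSS code whose qubits are the projective $p$-faces, with one family of checks indexed by projective $(p+1)$-faces $f$ (each acting on the $p$-faces in the lower shadow of $f$) and the other family indexed by projective $(p-1)$-faces $g$ (each acting on the $p$-faces in the upper shadow of $g$). *)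

theory Defs
  imports Complex_Main
begin

text \<open>Symbols of a face word: 0, 1, or * (free coordinate).\<close>
datatype sym = S0 | S1 | SStar

definition face :: "nat \<Rightarrow> nat \<Rightarrow> sym list set" where
  "face N r = {x. length x = N \<and> length (filter (\<lambda>s. s = SStar) x) = r}"

fun flip :: "sym \<Rightarrow> sym" where
  "flip S0 = S1" | "flip S1 = S0" | "flip SStar = SStar"

definition compl_face :: "sym list \<Rightarrow> sym list" where
  "compl_face x = map flip x"

definition pclass :: "sym list \<Rightarrow> sym list set" where
  "pclass x = {x, compl_face x}"

definition pface :: "nat \<Rightarrow> nat \<Rightarrow> sym list set set" where
  "pface N r = pclass ` face N r"

definition upper_shadow :: "sym list \<Rightarrow> sym list set" where
  "upper_shadow x = {x[i := SStar] | i. i < length x \<and> x ! i \<noteq> SStar}"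

definition lower_shadow :: "sym list \<Rightarrow> sym list set" where
  "lower_shadow x = {x[i := b] | i b. i < length x \<and> x ! i = SStar \<and> b \<in> {S0, S1}}"

definition pupper_shadow :: "sym list set \<Rightarrow> sym list set set" where
  "pupper_shadow F = pclass ` (\<Union>x\<in>F. upper_shadow x)"

definition plower_shadow :: "sym list set \<Rightarrow> sym list set set" where
  "plower_shadow F = pclass ` (\<Union>x\<in>F. lower_shadow x)"

text \<open>Checks of the (N,p)-projective code touched by an error E (a set of qubits = projective p-faces):
  checks indexed by projective (p+1)-faces act on their lower shadow,
  checks indexed by projective (p-1)-faces act on their upper shadow.\<close>
definition touched_upper_checks :: "nat \<Rightarrow> nat \<Rightarrow> sym list set set \<Rightarrow> sym list set set" where
  "touched_upper_checks N p E = {f \<in> pface N (p + 1). plower_shadow f \<inter> E \<noteq> {}}"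

definition touched_lower_checks :: "nat \<Rightarrow> nat \<Rightarrow> sym list set set \<Rightarrow> sym list set set" where
  "touched_lower_checks N p E = {g \<in> pface N (p - 1). pupper_shadow g \<inter> E \<noteq> {}}"

end

(*
  Unfold the projective p-faces of E into the 2|E| ordinary p-faces they consist of (for p < N a
  face differs from its complement). Each p-face has N - p upper and 2p lower shadow elements, and
  two distinct faces of the same length share at most one of each: the only common upper neighbour
  stars every coordinate where they differ, the only common lower neighbour fills the stars of one
  with the entries of the other. By the Bonferroni inequality the shadows of the 2|E| faces
  therefore cover at least 2|E| d - C(2|E|, 2) faces, where d = N - p resp. d = 2p, and passing to
  projective classes loses at most a factor 2. The hypothesis |E| <= N/64 makes the quadratic loss
  at most a 1/32 fraction of the linear term.
*)
theory Submission
  imports Defs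
begin

lemma length_filter_list_update:
  "i < length xs \<Longrightarrow> length (filter P (xs[i := v])) + (if P (xs ! i) then 1 else 0)
     = length (filter P xs) + (if P v then 1 else 0)"
proof (induction xs arbitrary: i)
  case (Cons a xs)
  then show ?case by (cases i) auto
qed simp

lemma card_UN_ge_of_pairwise_Int_le_1:
  assumes "finite A" "\<And>a. a \<in> A \<Longrightarrow> finite (B a)" "\<And>a. a \<in> A \<Longrightarrow> d \<le> card (B a)"
    "\<And>a b. a \<in> A \<Longrightarrow> b \<in> A \<Longrightarrow> a \<noteq> b \<Longrightarrow> card (B a \<inter> B b) \<le> 1"
  shows "card A * d \<le> card (\<Union>a\<in>A. B a) + (card A choose 2)"
  using assms
proof (induction A rule: finite_induct)
  case (insert x F)
  define U where "U = (\<Union>a\<in>F. B a)"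
  have "card (B x \<inter> U) \<le> (\<Sum>b\<in>F. card (B x \<inter> B b))"
    unfolding U_def Int_UN_distrib by (rule card_UN_le[OF insert.hyps(1)])
  also have "\<dots> \<le> card F"
    using sum_mono[of F "\<lambda>b. card (B x \<inter> B b)" "\<lambda>_. 1"] insert by fastforce
  finally have "card (B x \<inter> U) \<le> card F" .
  moreover have "card (B x \<union> U) + card (B x \<inter> U) = card (B x) + card U"
    by (rule card_Un_Int[symmetric]) (use insert in \<open>auto simp: U_def\<close>)
  moreover have "card F * d \<le> card U + (card F choose 2)"
    unfolding U_def by (rule insert.IH) (use insert.prems in auto)
  moreover have "d \<le> card (B x)" using insert by simp
  ultimately show ?case
    using insert.hyps by (simp add: U_def numeral_2_eq_2)
qed simp

lemma double_choose_two_le: "(2 * n choose 2) \<le> 2 * (n * n)"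
  by (simp add: choose_two)

lemma card_le_1_if_subset_singleton: "A \<subseteq> {a} \<Longrightarrow> card A \<le> 1"
  using card_mono[of "{a}" A] by simp

lemma flip_eq_SStar_iff [simp]: "flip s = SStar \<longleftrightarrow> s = SStar"
  by (cases s) auto

lemma compl_face_in_face: "x \<in> face N r \<Longrightarrow> compl_face x \<in> face N r"
  by (simp add: face_def compl_face_def filter_map comp_def)

lemma flip_flip [simp]: "flip (flip s) = s"
  by (cases s) auto

lemma compl_face_compl_face [simp]: "compl_face (compl_face x) = x"
  by (simp add: compl_face_def comp_def map_idI)

lemma pclass_eq_if_mem: "x \<in> pclass y \<Longrightarrow> pclass x = pclass y"
  by (auto simp: pclass_def)

lemma card_pclass:
  assumes "x \<in> face N r" "r < N"
  shows "card (pclass x) = 2"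
proof -
  have "length (filter (\<lambda>s. s = SStar) x) < length x"
    using assms by (simp add: face_def)
  then obtain i where i: "i < length x" "x ! i \<noteq> SStar"
    by (metis (mono_tags, lifting) filter_True in_set_conv_nth less_irrefl)
  then have "compl_face x \<noteq> x"
    by (cases "x ! i") (auto simp: compl_face_def dest!: arg_cong[where f = "\<lambda>y. y ! i"])
  then show ?thesis by (simp add: pclass_def)
qed

lemma finite_UNIV_sym: "finite (UNIV :: sym set)"
proof -
  have "(UNIV :: sym set) = {S0, S1, SStar}"
    using sym.exhaust by auto
  then show ?thesis by (metis finite.emptyI finite.insertI)
qed

lemma finite_face: "finite (face N r)"
proof (rule finite_subset)
  show "face N r \<subseteq> {xs. set xs \<subseteq> UNIV \<and> length xs = N}"
    by (auto simp: face_def)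
  show "finite {xs. set xs \<subseteq> (UNIV :: sym set) \<and> length xs = N}"
    using finite_UNIV_sym by (rule finite_lists_length_eq)
qed

lemma finite_pface: "finite (pface N r)"
  by (simp add: pface_def finite_face)

lemma upper_shadow_eq_image:
  "upper_shadow x = (\<lambda>i. x[i := SStar]) ` {i. i < length x \<and> x ! i \<noteq> SStar}"
  by (auto simp: upper_shadow_def)

lemma lower_shadow_eq_image:
  "lower_shadow x = (\<lambda>(i, b). x[i := b]) ` ({i. i < length x \<and> x ! i = SStar} \<times> {S0, S1})"
  by (auto simp: lower_shadow_def)

lemma finite_upper_shadow: "finite (upper_shadow x)"
  by (simp add: upper_shadow_eq_image)

lemma finite_lower_shadow: "finite (lower_shadow x)"
  by (simp add: lower_shadow_eq_image)

lemma card_upper_shadow: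
  assumes "x \<in> face N r"
  shows "card (upper_shadow x) = N - r"
proof -
  have "inj_on (\<lambda>i. x[i := SStar]) {i. i < length x \<and> x ! i \<noteq> SStar}"
    by (rule inj_onI) (metis (mono_tags, lifting) mem_Collect_eq nth_list_update_eq nth_list_update_neq)
  moreover have "length (filter (\<lambda>s. s \<noteq> SStar) x) = N - r"
    using assms sum_length_filter_compl[of "\<lambda>s. s = SStar" x] by (simp add: face_def)
  ultimately show ?thesis
    by (simp add: upper_shadow_eq_image card_image length_filter_conv_card)
qed

lemma card_lower_shadow:
  assumes "x \<in> face N r"
  shows "card (lower_shadow x) = 2 * r"
proof -
  have "inj_on (\<lambda>(i, b). x[i := b]) ({i. i < length x \<and> x ! i = SStar} \<times> {S0, S1})"
  proof (rule inj_onI, clarify)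
    fix i b j c
    assume "x[i := b] = x[j := c]" "i < length x" "j < length x" "x ! i = SStar"
      "b \<in> {S0, S1}" "c \<in> {S0, S1}"
    then show "i = j \<and> b = c"
      by (metis empty_iff insert_iff nth_list_update_eq nth_list_update_neq sym.distinct(3,5))
  qed
  then show ?thesis
    using assms by (auto simp: lower_shadow_eq_image card_image card_cartesian_product
        face_def length_filter_conv_card)
qed

lemma upper_shadow_in_face:
  assumes "x \<in> face N r" "f \<in> upper_shadow x"
  shows "f \<in> face N (r + 1)"
proof -
  obtain i where "f = x[i := SStar]" "i < length x" "x ! i \<noteq> SStar"
    using assms(2) by (auto simp: upper_shadow_def)
  then show ?thesis
    using assms(1) length_filter_list_update[of i x "\<lambda>s. s = SStar" SStar] by (simp add: face_def)
qed

lemma lower_shadow_in_face: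
  assumes "x \<in> face N r" "g \<in> lower_shadow x"
  shows "g \<in> face N (r - 1)"
proof -
  obtain i b where "g = x[i := b]" "i < length x" "x ! i = SStar" "b \<noteq> SStar"
    using assms(2) by (auto simp: lower_shadow_def)
  then show ?thesis
    using assms(1) length_filter_list_update[of i x "\<lambda>s. s = SStar" b] by (simp add: face_def)
qed

lemma mem_lower_shadow_iff_mem_upper_shadow: "y \<in> lower_shadow x \<longleftrightarrow> x \<in> upper_shadow y"
proof
  assume "y \<in> lower_shadow x"
  then obtain i b where "y = x[i := b]" "i < length x" "x ! i = SStar" "b \<in> {S0, S1}"
    by (auto simp: lower_shadow_def)
  then show "x \<in> upper_shadow y"
    unfolding upper_shadow_def by (auto intro!: exI[of _ i]) (metis list_update_id)+
next
  assume "x \<in> upper_shadow y"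
  then obtain i where "x = y[i := SStar]" "i < length y" "y ! i \<noteq> SStar"
    by (auto simp: upper_shadow_def)
  moreover have "y ! i \<in> {S0, S1}"
    using \<open>y ! i \<noteq> SStar\<close> by (cases "y ! i") auto
  ultimately show "y \<in> lower_shadow x"
    unfolding lower_shadow_def by (auto intro!: exI[of _ i]) (metis list_update_id)+
qed

lemma upper_shadow_Int_subset:
  assumes "length x = length y" "x \<noteq> y"
  shows "upper_shadow x \<inter> upper_shadow y \<subseteq> {map2 (\<lambda>a b. if a = b then a else SStar) x y}"
proof
  fix f assume "f \<in> upper_shadow x \<inter> upper_shadow y"
  then obtain i j where f: "f = x[i := SStar]" "f = y[j := SStar]"
    and ij: "i < length x" "j < length x" "x ! i \<noteq> SStar" "y ! j \<noteq> SStar"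
    using assms(1) unfolding upper_shadow_def by (simp, metis)
  \<comment> \<open>if both star the same coordinate, x and y agree everywhere else, so they differ there\<close>
  have "x ! i \<noteq> y ! i" if "i = j"
    by (metis f ij(1) that assms(2) list_update_id list_update_overwrite)
  then have "f ! k = (if x ! k = y ! k then x ! k else SStar)" if "k < length x" for k
    using f ij that assms(1) by (metis nth_list_update)
  then show "f \<in> {map2 (\<lambda>a b. if a = b then a else SStar) x y}"
    using f(1) assms(1) by (auto intro!: nth_equalityI)
qed

lemma lower_shadow_Int_subset:
  assumes "length x = length y" "x \<noteq> y"
  shows "lower_shadow x \<inter> lower_shadow y \<subseteq> {map2 (\<lambda>a b. if a = SStar then b else a) x y}"
proof
  fix g assume "g \<in> lower_shadow x \<inter> lower_shadow y"
  then obtain i j b c where g: "g = x[i := b]" "g = y[j := c]"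
    and ij: "i < length x" "j < length x" "x ! i = SStar" "y ! j = SStar" "b \<noteq> SStar" "c \<noteq> SStar"
    using assms(1) unfolding lower_shadow_def by force
  have "i \<noteq> j"
    by (metis g ij(1,3,4) assms list_update_id list_update_overwrite)
  then have "g ! k = (if x ! k = SStar then y ! k else x ! k)" if "k < length x" for k
    using g ij that assms(1) by (metis nth_list_update)
  then show "g \<in> {map2 (\<lambda>a b. if a = SStar then b else a) x y}"
    using g(1) assms(1) by (auto intro!: nth_equalityI)
qed

lemma card_Union_pface:
  assumes "E \<subseteq> pface N r" "r < N"
  shows "card (\<Union>E) = 2 * card E"
proof -
  have "pairwise disjnt E"
  proof (rule pairwiseI, rule ccontr)
    fix X Y assume "X \<in> E" "Y \<in> E" "X \<noteq> Y" "\<not> disjnt X Y"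
    moreover obtain z where "z \<in> X" "z \<in> Y"
      using \<open>\<not> disjnt X Y\<close> by (auto simp: disjnt_def)
    moreover obtain x y where "X = pclass x" "Y = pclass y"
      using \<open>X \<in> E\<close> \<open>Y \<in> E\<close> assms(1) unfolding pface_def by blast
    ultimately show False
      using \<open>X \<noteq> Y\<close> pclass_eq_if_mem by metis
  qed
  moreover have "finite X" "card X = 2" if "X \<in> E" for X
    using that assms card_pclass by (auto simp: pface_def pclass_def)
  ultimately show ?thesis
    by (simp add: card_Union_disjoint)
qed

lemma card_le_twice_card_pclass_image:
  assumes "finite U"
  shows "card U \<le> 2 * card (pclass ` U)"
proof -
  have "card U \<le> card (\<Union>(pclass ` U))"
    using assms by (intro card_mono) (auto simp: pclass_def)
  also have "\<dots> \<le> (\<Sum>X\<in>pclass ` U. card X)"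
    by (rule card_Union_le_sum_card)
  also have "\<dots> \<le> (\<Sum>X\<in>pclass ` U. 2)"
    by (rule sum_mono) (auto simp: pclass_def card_insert_if)
  finally show ?thesis by simp
qed

lemma Union_pface_subset_face: "E \<subseteq> pface N r \<Longrightarrow> \<Union>E \<subseteq> face N r"
  by (auto simp: pface_def pclass_def compl_face_in_face)

lemma pclass_eq_if_mem_pface: "X \<in> pface N r \<Longrightarrow> x \<in> X \<Longrightarrow> pclass x = X"
  by (auto simp: pface_def dest: pclass_eq_if_mem)

lemma card_pclass_image_shadows_ge:
  fixes S :: "sym list \<Rightarrow> sym list set"
  assumes E: "E \<subseteq> pface N r" "r < N"
    and S: "\<And>x. x \<in> face N r \<Longrightarrow> finite (S x)" "\<And>x. x \<in> face N r \<Longrightarrow> d \<le> card (S x)"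
      "\<And>x y. x \<in> face N r \<Longrightarrow> y \<in> face N r \<Longrightarrow> x \<noteq> y \<Longrightarrow> card (S x \<inter> S y) \<le> 1"
  shows "2 * card E * d \<le> 2 * card (pclass ` (\<Union>x\<in>\<Union>E. S x)) + (2 * card E choose 2)"
proof -
  have faces: "\<Union>E \<subseteq> face N r"
    using E(1) by (rule Union_pface_subset_face)
  then have "finite (\<Union>E)"
    using finite_face finite_subset by blast
  then have "card (\<Union>E) * d \<le> card (\<Union>x\<in>\<Union>E. S x) + (card (\<Union>E) choose 2)"
    by (rule card_UN_ge_of_pairwise_Int_le_1) (use faces S in blast)+
  moreover have "card (\<Union>x\<in>\<Union>E. S x) \<le> 2 * card (pclass ` (\<Union>x\<in>\<Union>E. S x))"
    by (intro card_le_twice_card_pclass_image finite_UN_I) (use \<open>finite (\<Union>E)\<close> faces S(1) in blast)+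
  ultimately show ?thesis
    using card_Union_pface[OF E] by simp
qed

lemma pclass_image_upper_shadows_subset:
  assumes "E \<subseteq> pface N r"
  shows "pclass ` (\<Union>x\<in>\<Union>E. upper_shadow x) \<subseteq> touched_upper_checks N r E"
proof (rule image_subsetI)
  fix f assume "f \<in> (\<Union>x\<in>\<Union>E. upper_shadow x)"
  then obtain X x where "X \<in> E" "x \<in> X" "f \<in> upper_shadow x"
    by blast
  then have "pclass f \<in> pface N (r + 1)"
    using Union_pface_subset_face[OF assms] upper_shadow_in_face by (auto simp: pface_def)
  moreover have "pclass x \<in> plower_shadow (pclass f)"
    using \<open>f \<in> upper_shadow x\<close>
    by (auto simp: plower_shadow_def pclass_def mem_lower_shadow_iff_mem_upper_shadow)
  moreover have "pclass x = X"
    using \<open>X \<in> E\<close> \<open>x \<in> X\<close> assms pclass_eq_if_mem_pface by blast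
  ultimately show "pclass f \<in> touched_upper_checks N r E"
    using \<open>X \<in> E\<close> by (auto simp: touched_upper_checks_def)
qed

lemma pclass_image_lower_shadows_subset:
  assumes "E \<subseteq> pface N r"
  shows "pclass ` (\<Union>x\<in>\<Union>E. lower_shadow x) \<subseteq> touched_lower_checks N r E"
proof (rule image_subsetI)
  fix g assume "g \<in> (\<Union>x\<in>\<Union>E. lower_shadow x)"
  then obtain X x where "X \<in> E" "x \<in> X" "g \<in> lower_shadow x"
    by blast
  then have "pclass g \<in> pface N (r - 1)"
    using Union_pface_subset_face[OF assms] lower_shadow_in_face by (auto simp: pface_def)
  moreover have "pclass x \<in> pupper_shadow (pclass g)"
    using \<open>g \<in> lower_shadow x\<close>
    by (auto simp: pupper_shadow_def pclass_def simp flip: mem_lower_shadow_iff_mem_upper_shadow)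
  moreover have "pclass x = X"
    using \<open>X \<in> E\<close> \<open>x \<in> X\<close> assms pclass_eq_if_mem_pface by blast
  ultimately show "pclass g \<in> touched_lower_checks N r E"
    using \<open>X \<in> E\<close> by (auto simp: touched_lower_checks_def)
qed

lemma card_touched_upper_checks_ge:
  assumes "E \<subseteq> pface N r" "r < N"
  shows "2 * card E * (N - r) \<le> 2 * card (touched_upper_checks N r E) + (2 * card E choose 2)"
proof -
  have "finite (touched_upper_checks N r E)"
    using finite_pface[of N "r + 1"] by (rule rev_finite_subset) (auto simp: touched_upper_checks_def)
  then have "card (pclass ` (\<Union>x\<in>\<Union>E. upper_shadow x)) \<le> card (touched_upper_checks N r E)"
    using pclass_image_upper_shadows_subset[OF assms(1)] by (rule card_mono)
  moreover have "2 * card E * (N - r)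
      \<le> 2 * card (pclass ` (\<Union>x\<in>\<Union>E. upper_shadow x)) + (2 * card E choose 2)"
    using assms card_upper_shadow finite_upper_shadow
      card_le_1_if_subset_singleton[OF upper_shadow_Int_subset]
    by (intro card_pclass_image_shadows_ge) (auto simp: face_def)
  ultimately show ?thesis by linarith
qed

lemma card_touched_lower_checks_ge:
  assumes "E \<subseteq> pface N r" "r < N"
  shows "2 * card E * (2 * r) \<le> 2 * card (touched_lower_checks N r E) + (2 * card E choose 2)"
proof -
  have "finite (touched_lower_checks N r E)"
    using finite_pface[of N "r - 1"] by (rule rev_finite_subset) (auto simp: touched_lower_checks_def)
  then have "card (pclass ` (\<Union>x\<in>\<Union>E. lower_shadow x)) \<le> card (touched_lower_checks N r E)"
    using pclass_image_lower_shadows_subset[OF assms(1)] by (rule card_mono)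
  moreover have "2 * card E * (2 * r)
      \<le> 2 * card (pclass ` (\<Union>x\<in>\<Union>E. lower_shadow x)) + (2 * card E choose 2)"
    using assms card_lower_shadow finite_lower_shadow
      card_le_1_if_subset_singleton[OF lower_shadow_Int_subset]
    by (intro card_pclass_image_shadows_ge) (auto simp: face_def)
  ultimately show ?thesis by linarith
qed

theorem mainTheorem4:
  fixes N p :: nat and E :: "sym list set set"
  assumes "even N" and "p = N div 2"
    and "E \<subseteq> pface N p"
    and "real (card E) \<le> real N / 64"
  shows "real (card (touched_upper_checks N p E)) \<ge> real (card E) * (real N / 2) * (15 / 16)
       \<and> real (card (touched_lower_checks N p E)) \<ge> real (card E) * real N * (15 / 16)"
proof (cases "N = 0")
  case True
  then show ?thesis using assms(4) by simp
next
  case False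
  define e where "e = card E"
  have "p < N" "N = 2 * p"
    using False assms(1,2) by auto
  have choose_le: "real (2 * e choose 2) \<le> 2 * (real e * real e)"
    using of_nat_mono[OF double_choose_two_le] by simp
  have "real e * real e \<le> real e * (real p / 32)"
    using assms(4) \<open>N = 2 * p\<close> unfolding e_def by (intro mult_left_mono) auto
  then have e_sq_le: "real e * real e \<le> real e * real p / 32"
    by simp
  have "real (2 * e * p) \<le> real (2 * card (touched_upper_checks N p E) + (2 * e choose 2))"
    using card_touched_upper_checks_ge[OF assms(3) \<open>p < N\<close>] \<open>N = 2 * p\<close>
    unfolding e_def of_nat_le_iff by simp
  then have upper: "15 / 16 * (real e * real p) \<le> real (card (touched_upper_checks N p E))"
    using choose_le e_sq_le by simp
  have "real (2 * e * (2 * p)) \<le> real (2 * card (touched_lower_checks N p E) + (2 * e choose 2))"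
    using card_touched_lower_checks_ge[OF assms(3) \<open>p < N\<close>]
    unfolding e_def of_nat_le_iff by simp
  then have lower: "15 / 8 * (real e * real p) \<le> real (card (touched_lower_checks N p E))"
    using choose_le e_sq_le by simp
  show ?thesis
    using upper lower \<open>N = 2 * p\<close> unfolding e_def by (simp add: algebra_simps)
qed

end
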